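(* Let $\mathbf{M}=(m_{i,j})$ be a $k\times n$ binary matrix satisfying (P1) and (P3). Suppose columns $j_{\max}$ and $j_{\min}$ of $\mathbf{M}$ have, respectively, the maximum and the minimum column weight among all columns of $\mathbf{M}$, and that these two weights differ by at least $2$. Then there exists a row $i_s\in[k]$ with $m_{i_s,j_{\max}}=1$ and $m_{i_s,j_{\min}}=0$ such that the matrix obtained from $\mathbf{M}$ by setting $m_{i_s,j_{\max}}:=0$ and $m_{i_s,j_{\min}}:=1$ still satisfies (P1) and (P3).
   Context: $[n]=\{1,\dots,n\}$. Weight means Hamming weight (number of ones). For a $k\times n$ binary matrix with row supports $R_i=\{j\in[n]: m_{i,j}=1\}$, property (P1) is: each row has weight $n-k+1$; property (P3) is: $\big|\bigcup_{i\in I}R_i\big|\ge n-k+|I|$ for every nonempty $I\subseteq[k]$. (In the paper this is stated as: in every iteration of Algorithm 1, which starts from a matrix satisfying (P1) and (P3) and repeatedly performs such swaps between a maximum-weight and a minimum-weight column while the maximum and minimum column weights differ by at least 2, such a row can always be found.) *)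

theory Defs
  imports Main
begin

text \<open>A k x n binary matrix is modelled as M :: nat => nat => bool, with rows
  indexed by {1..k} and columns by {1..n}; M i j means entry m_{i,j} = 1.
  Entries outside the index range are irrelevant.\<close>

definition row_supp :: "(nat \<Rightarrow> nat \<Rightarrow> bool) \<Rightarrow> nat \<Rightarrow> nat \<Rightarrow> nat set" where
  "row_supp M n i = {j \<in> {1..n}. M i j}"

definition col_weight :: "(nat \<Rightarrow> nat \<Rightarrow> bool) \<Rightarrow> nat \<Rightarrow> nat \<Rightarrow> nat" where
  "col_weight M k j = card {i \<in> {1..k}. M i j}"

definition P1 :: "nat \<Rightarrow> nat \<Rightarrow> (nat \<Rightarrow> nat \<Rightarrow> bool) \<Rightarrow> bool" where
  "P1 k n M \<longleftrightarrow> (\<forall>i \<in> {1..k}. int (card (row_supp M n i)) = int n - int k + 1)"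

definition P3 :: "nat \<Rightarrow> nat \<Rightarrow> (nat \<Rightarrow> nat \<Rightarrow> bool) \<Rightarrow> bool" where
  "P3 k n M \<longleftrightarrow> (\<forall>I. I \<subseteq> {1..k} \<and> I \<noteq> {} \<longrightarrow>
      int (card (\<Union>i\<in>I. row_supp M n i)) \<ge> int n - int k + int (card I))"

definition swap_entries :: "(nat \<Rightarrow> nat \<Rightarrow> bool) \<Rightarrow> nat \<Rightarrow> nat \<Rightarrow> nat \<Rightarrow> nat \<Rightarrow> nat \<Rightarrow> bool" where
  "swap_entries M is jmax jmin =
     (\<lambda>i j. if i = is \<and> j = jmax then False
            else if i = is \<and> j = jmin then True
            else M i j)"

end

theory Submission
  imports Defs
begin

text \<open>Call a set I of rows tight if it meets (P3) with equality. Moving the 1 of row a from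
  column j1 to column j2 keeps (P1), and if it breaks (P3) then some tight set I contains a while
  the other rows of I cover j2 but not j1; so I contains a row with a 1 in j2 and a 0 in j1.
  Submodularity of the size of unions shows that the columns covered by both of two intersecting
  tight sets are exactly those covered by their intersection; since the tight set of a covers j1
  only through a, the tight sets of different rows a are disjoint. If every swap failed we would
  thus inject the rows with pattern (1,0) in (j1,j2) into those with pattern (0,1), contradicting
  that column j1 is heavier than column j2.\<close>

definition tight_set :: "nat \<Rightarrow> nat \<Rightarrow> (nat \<Rightarrow> nat \<Rightarrow> bool) \<Rightarrow> nat set \<Rightarrow> bool" where
  "tight_set k n M I \<longleftrightarrow> int (card (\<Union>i\<in>I. row_supp M n i)) = int n - int k + int (card I)"

lemma finite_rows_union: "finite (\<Union>i\<in>I. row_supp M n i)"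
proof (rule finite_subset)
  show "(\<Union>i\<in>I. row_supp M n i) \<subseteq> {1..n}" unfolding row_supp_def by auto
qed simp

lemma finite_row_supp: "finite (row_supp M n i)"
  using finite_rows_union[where I="{i}"] by simp

lemma rows_union_swap_entries:
  assumes "j2 \<in> {1..n}" "j1 \<noteq> j2"
  shows "(\<Union>i\<in>I. row_supp (swap_entries M a j1 j2) n i) =
    (\<Union>i\<in>I-{a}. row_supp M n i) \<union>
    (if a \<in> I then insert j2 (row_supp M n a - {j1}) else {})"
  using assms unfolding row_supp_def swap_entries_def by auto

lemma card_insert_Diff_swap:
  assumes "finite R" "x \<in> R" "y \<notin> R"
  shows "card (insert y (R - {x})) = card R"
proof -
  have "card (insert y (R - {x})) = Suc (card (R - {x}))"
    using assms by simp
  also have "\<dots> = card R" using assms(1,2) by (rule card_Suc_Diff1)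
  finally show ?thesis .
qed

lemma card_Un_le_card_Un_swap_plus_one:
  assumes "finite V" "finite R"
  shows "card (V \<union> R) \<le> card (V \<union> insert y (R - {x})) + 1"
proof -
  have "card (V \<union> R) \<le> card (insert x (V \<union> insert y (R - {x})))"
    using assms by (intro card_mono) auto
  also have "\<dots> \<le> card (V \<union> insert y (R - {x})) + 1"
    using assms by (simp add: card_insert_if)
  finally show ?thesis .
qed

lemma card_Un_le_card_Un_swap:
  assumes "finite V" "finite R" "x \<in> V \<or> y \<notin> V \<union> R"
  shows "card (V \<union> R) \<le> card (V \<union> insert y (R - {x}))"
proof (cases "x \<in> V")
  case True
  then show ?thesis using assms by (intro card_mono) auto
next
  case False
  then have "V \<union> insert y (R - {x}) = insert y ((V \<union> R) - {x})" by auto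
  moreover have "card (V \<union> R) \<le> card ((V \<union> R) - {x}) + 1"
    using assms(1,2) card_Suc_Diff1[of "V \<union> R" x] by (cases "x \<in> V \<union> R") auto
  ultimately show ?thesis using assms False by (simp add: card_insert_if)
qed

lemma P1_swap_entries:
  assumes "P1 k n M" "M a j1" "\<not> M a j2" "j1 \<in> {1..n}" "j2 \<in> {1..n}"
  shows "P1 k n (swap_entries M a j1 j2)"
proof -
  have ne: "j1 \<noteq> j2" using assms(2,3) by auto
  have "card (row_supp (swap_entries M a j1 j2) n i) = card (row_supp M n i)" for i
  proof (cases "i = a")
    case True
    have "j1 \<in> row_supp M n a" "j2 \<notin> row_supp M n a"
      using assms(2-4) unfolding row_supp_def by auto
    moreover have
      "row_supp (swap_entries M a j1 j2) n a = insert j2 (row_supp M n a - {j1})"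
      using rows_union_swap_entries[OF assms(5) ne, where I="{a}" and M=M and a=a] by simp
    ultimately show ?thesis
      using True card_insert_Diff_swap[OF finite_row_supp] by simp
  qed (use rows_union_swap_entries[OF assms(5) ne, where I="{i}" and M=M and a=a] in simp)
  then show ?thesis using assms(1) unfolding P1_def by simp
qed

lemma tight_set_if_swap_violates_P3:
  assumes "P3 k n M" "M a j1" "\<not> M a j2" "j1 \<in> {1..n}" "j2 \<in> {1..n}"
    and "\<not> P3 k n (swap_entries M a j1 j2)"
  obtains I where "a \<in> I" "I \<subseteq> {1..k}" "tight_set k n M I"
    "j1 \<notin> (\<Union>i\<in>I-{a}. row_supp M n i)" "j2 \<in> (\<Union>i\<in>I-{a}. row_supp M n i)"
proof -
  have ne: "j1 \<noteq> j2" using assms(2,3) by auto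
  obtain I where I: "I \<subseteq> {1..k}" "I \<noteq> {}"
    and lt: "int (card (\<Union>i\<in>I. row_supp (swap_entries M a j1 j2) n i))
               < int n - int k + int (card I)"
    using assms(6) unfolding P3_def by (auto simp: not_le)
  have ge: "int (card (\<Union>i\<in>I. row_supp M n i)) \<ge> int n - int k + int (card I)"
    using assms(1) I unfolding P3_def by auto
  define V where "V = (\<Union>i\<in>I-{a}. row_supp M n i)"
  define R where "R = row_supp M n a"
  have "a \<in> I"
  proof (rule ccontr)
    assume "a \<notin> I"
    then show False
      using lt ge rows_union_swap_entries[OF assms(5) ne, where I=I and M=M and a=a] by simp
  qed
  then have U: "(\<Union>i\<in>I. row_supp M n i) = V \<union> R"
    unfolding V_def R_def by blast
  have U': "(\<Union>i\<in>I. row_supp (swap_entries M a j1 j2) n i) = V \<union> insert j2 (R - {j1})"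
    using \<open>a \<in> I\<close> rows_union_swap_entries[OF assms(5) ne, where I=I and M=M and a=a]
    unfolding V_def R_def by simp
  have fin: "finite V" "finite R"
    unfolding V_def R_def by (simp_all add: finite_rows_union finite_row_supp)
  have "j2 \<notin> R" using assms(3) unfolding R_def row_supp_def by simp
  have "tight_set k n M I"
    using card_Un_le_card_Un_swap_plus_one[OF fin, of j2 j1] lt ge
    unfolding tight_set_def U U' by linarith
  moreover have "\<not> (j1 \<in> V \<or> j2 \<notin> V \<union> R)"
  proof
    assume "j1 \<in> V \<or> j2 \<notin> V \<union> R"
    from card_Un_le_card_Un_swap[OF fin this] show False
      using lt ge unfolding U U' by linarith
  qed
  ultimately show ?thesis using that \<open>a \<in> I\<close> I(1) \<open>j2 \<notin> R\<close> unfolding V_def by blast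
qed

text \<open>Submodularity: (P3) bounds the unions of I \<union> J and I \<inter> J from below, while tightness
  fixes the unions of I and J.\<close>
lemma rows_union_Int_tight:
  assumes "P3 k n M" "I \<subseteq> {1..k}" "J \<subseteq> {1..k}" "I \<inter> J \<noteq> {}"
    and "tight_set k n M I" "tight_set k n M J"
  shows "(\<Union>i\<in>I\<inter>J. row_supp M n i) = (\<Union>i\<in>I. row_supp M n i) \<inter> (\<Union>i\<in>J. row_supp M n i)"
proof (rule card_seteq)
  let ?U = "\<lambda>I. \<Union>i\<in>I. row_supp M n i"
  have P3': "int n - int k + int (card K) \<le> int (card (?U K))"
    if "K \<subseteq> {1..k}" "K \<noteq> {}" for K
    using assms(1) that unfolding P3_def by blast
  have fin: "finite I" "finite J" using assms(2,3) finite_subset by blast+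
  have "card (?U I) + card (?U J) = card (?U I \<union> ?U J) + card (?U I \<inter> ?U J)"
    by (rule card_Un_Int) (rule finite_rows_union)+
  moreover have "card I + card J = card (I \<union> J) + card (I \<inter> J)"
    using card_Un_Int[OF fin] .
  moreover have "int n - int k + int (card (I \<union> J)) \<le> int (card (?U I \<union> ?U J))"
    using P3'[of "I \<union> J"] assms(2-4) by (auto simp: UN_Un)
  moreover have "int n - int k + int (card (I \<inter> J)) \<le> int (card (?U (I \<inter> J)))"
    using P3'[of "I \<inter> J"] assms(2-4) by (simp add: le_infI1)
  ultimately show "card (?U I \<inter> ?U J) \<le> card (?U (I \<inter> J))"
    using assms(5,6) unfolding tight_set_def by linarith
  show "finite (?U I \<inter> ?U J)" using finite_rows_union by blast
  show "?U (I \<inter> J) \<subseteq> ?U I \<inter> ?U J" by blast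
qed

lemma tight_sets_disjoint:
  assumes "P3 k n M" "I \<subseteq> {1..k}" "J \<subseteq> {1..k}" "tight_set k n M I" "tight_set k n M J"
    and "a \<in> I" "b \<in> J" "a \<noteq> b" "j \<in> row_supp M n a" "j \<in> row_supp M n b"
    and "j \<notin> (\<Union>i\<in>I-{a}. row_supp M n i)" "j \<notin> (\<Union>i\<in>J-{b}. row_supp M n i)"
  shows "I \<inter> J = {}"
proof (rule ccontr)
  assume "I \<inter> J \<noteq> {}"
  have "a \<notin> J" using assms(8,9,12) by blast
  have "j \<in> (\<Union>i\<in>I. row_supp M n i) \<inter> (\<Union>i\<in>J. row_supp M n i)"
    using assms(6,7,9,10) by blast
  then have "j \<in> (\<Union>i\<in>I\<inter>J. row_supp M n i)"
    using rows_union_Int_tight[OF assms(1-3) \<open>I \<inter> J \<noteq> {}\<close> assms(4,5)] by simp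
  then show False using \<open>a \<notin> J\<close> assms(11) by blast
qed

lemma card_rows_pattern_less_if_col_weight_less:
  assumes "col_weight M k j2 < col_weight M k j1"
  shows "card {i \<in> {1..k}. M i j2 \<and> \<not> M i j1} < card {i \<in> {1..k}. M i j1 \<and> \<not> M i j2}"
proof -
  have split: "col_weight M k j =
      card {i \<in> {1..k}. M i j \<and> M i j'} + card {i \<in> {1..k}. M i j \<and> \<not> M i j'}" for j j'
  proof -
    have "{i \<in> {1..k}. M i j} =
        {i \<in> {1..k}. M i j \<and> M i j'} \<union> {i \<in> {1..k}. M i j \<and> \<not> M i j'}" by blast
    then show ?thesis unfolding col_weight_def by (simp add: card_Un_disjoint disjoint_iff)
  qed
  have "{i \<in> {1..k}. M i j2 \<and> M i j1} = {i \<in> {1..k}. M i j1 \<and> M i j2}" by blast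
  then show ?thesis using split[of j1 j2] split[of j2 j1] assms by simp
qed

theorem exists_swap_row_preserving_P1_P3:
  assumes P1: "P1 k n M" and P3: "P3 k n M" and j: "j1 \<in> {1..n}" "j2 \<in> {1..n}"
    and weight: "col_weight M k j2 < col_weight M k j1"
  shows "\<exists>is \<in> {1..k}. M is j1 \<and> \<not> M is j2 \<and>
           P1 k n (swap_entries M is j1 j2) \<and> P3 k n (swap_entries M is j1 j2)"
proof (rule ccontr)
  assume fail: "\<not> ?thesis"
  define A where "A = {i \<in> {1..k}. M i j1 \<and> \<not> M i j2}"
  define B where "B = {i \<in> {1..k}. M i j2 \<and> \<not> M i j1}"
  have "\<forall>a\<in>A. \<exists>I. a \<in> I \<and> I \<subseteq> {1..k} \<and> tight_set k n M I \<and>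
      j1 \<notin> (\<Union>i\<in>I-{a}. row_supp M n i) \<and> (I - {a}) \<inter> B \<noteq> {}"
  proof
    fix a assume "a \<in> A"
    have a: "M a j1" "\<not> M a j2" using \<open>a \<in> A\<close> unfolding A_def by auto
    have "\<not> P3 k n (swap_entries M a j1 j2)"
      using fail \<open>a \<in> A\<close> P1_swap_entries[OF P1 a j] unfolding A_def by blast
    then obtain I where I: "a \<in> I" "I \<subseteq> {1..k}" "tight_set k n M I"
      "j1 \<notin> (\<Union>i\<in>I-{a}. row_supp M n i)" "j2 \<in> (\<Union>i\<in>I-{a}. row_supp M n i)"
      by (rule tight_set_if_swap_violates_P3[OF P3 a j])
    from I(5) obtain c where c: "c \<in> I - {a}" "j2 \<in> row_supp M n c" by blast
    have "j1 \<notin> row_supp M n c" using I(4) c(1) by blast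
    then have "c \<in> B" using I(2) c j(1) unfolding B_def row_supp_def by auto
    then show "\<exists>I. a \<in> I \<and> I \<subseteq> {1..k} \<and> tight_set k n M I \<and>
      j1 \<notin> (\<Union>i\<in>I-{a}. row_supp M n i) \<and> (I - {a}) \<inter> B \<noteq> {}"
      using I(1-4) c(1) by blast
  qed
  then obtain I where I: "\<And>a. a \<in> A \<Longrightarrow>
      a \<in> I a \<and> I a \<subseteq> {1..k} \<and> tight_set k n M (I a) \<and>
      j1 \<notin> (\<Union>i\<in>I a-{a}. row_supp M n i) \<and> (I a - {a}) \<inter> B \<noteq> {}"
    by (auto dest!: bchoice)
  have "\<forall>a\<in>A. \<exists>x. x \<in> (I a - {a}) \<inter> B" using I by blast
  then obtain c where c: "\<And>a. a \<in> A \<Longrightarrow> c a \<in> (I a - {a}) \<inter> B"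
    by (auto dest!: bchoice)
  have "inj_on c A"
  proof (rule inj_onI, rule ccontr)
    fix a b assume ab: "a \<in> A" "b \<in> A" "c a = c b" "a \<noteq> b"
    have "j1 \<in> row_supp M n a" "j1 \<in> row_supp M n b"
      using ab(1,2) j unfolding A_def row_supp_def by auto
    with ab(4) I[OF ab(1)] I[OF ab(2)] have "I a \<inter> I b = {}"
      by (intro tight_sets_disjoint[OF P3, of "I a" "I b" a b j1]) auto
    moreover have "c a \<in> I a \<inter> I b" using c[OF ab(1)] c[OF ab(2)] ab(3) by auto
    ultimately show False by blast
  qed
  then have "card A \<le> card B"
    using c by (intro card_inj_on_le) (auto simp: B_def)
  then show False
    using card_rows_pattern_less_if_col_weight_less[OF weight] unfolding A_def B_def by simp
qed

theorem lemma7: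
  fixes k n :: nat and M :: "nat \<Rightarrow> nat \<Rightarrow> bool" and jmax jmin :: nat
  assumes "P1 k n M" and "P3 k n M"
    and "jmax \<in> {1..n}" and "jmin \<in> {1..n}"
    and "\<forall>j \<in> {1..n}. col_weight M k j \<le> col_weight M k jmax"
    and "\<forall>j \<in> {1..n}. col_weight M k jmin \<le> col_weight M k j"
    and "col_weight M k jmax \<ge> col_weight M k jmin + 2"
  shows "\<exists>is \<in> {1..k}. M is jmax \<and> \<not> M is jmin \<and>
           P1 k n (swap_entries M is jmax jmin) \<and> P3 k n (swap_entries M is jmax jmin)"
  using exists_swap_row_preserving_P1_P3[OF assms(1-4)] assms(7) by simp

end
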